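(* Let $K\subset\mathcal{F}_n\mathbb{C}:=\{(c_1,\dots,c_n)\in\mathbb{C}^n: c_i\ne c_j\text{ for }i\ne j\}$ be compact. Then there exists $\varepsilon>0$ such that whenever $b\in K$ and $a\in\mathbb{C}^n$ satisfies $0<|a_j|\le\varepsilon$ for every $j$, the rational map $R_{a,b}(z)=\sum_{j=1}^n a_j/(z-b_j)$ is $n$-good.
   Context: A rational map $R$ of degree $n$ is $n$-good if $R^{-1}(\mathbb{D})$ is connected and bounded by $n$ disjoint analytic Jordan curves; known fact: a degree-$n$ rational map is $n$-good if and only if all its critical values lie in $\mathbb{D}$. *)

theory Defs
  imports "HOL-Analysis.Analysis"
begin

definition config_space :: "(complex ^ 'n) set" where
  "config_space = {c. \<forall>i j. i \<noteq> j \<longrightarrow> c $ i \<noteq> c $ j}"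

definition Rab :: "complex ^ 'n \<Rightarrow> complex ^ 'n \<Rightarrow> complex \<Rightarrow> complex" where
  "Rab a b z = (\<Sum>j\<in>UNIV. a $ j / (z - b $ j))"

definition analytic_jordan_curve :: "complex set \<Rightarrow> bool" where
  "analytic_jordan_curve C \<longleftrightarrow>
     (\<exists>U f. open U \<and> sphere 0 1 \<subseteq> U \<and> f holomorphic_on U \<and> inj_on f U \<and>
            C = f ` sphere 0 1)"

text \<open>Finite part of R^{-1}(D) for R = R_{a,b} (the point at infinity, mapped to 0,
  also belongs to the preimage; the poles b_j do not).\<close>
definition Rab_preimage_disc :: "complex ^ 'n \<Rightarrow> complex ^ 'n \<Rightarrow> complex set" where
  "Rab_preimage_disc a b = {z. (\<forall>j. z \<noteq> b $ j) \<and> norm (Rab a b z) < 1}"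

definition n_good :: "nat \<Rightarrow> complex set \<Rightarrow> bool" where
  "n_good n P \<longleftrightarrow> connected P \<and>
     (\<exists>C :: nat \<Rightarrow> complex set.
        (\<forall>i<n. analytic_jordan_curve (C i)) \<and>
        (\<forall>i<n. \<forall>j<n. i \<noteq> j \<longrightarrow> C i \<inter> C j = {}) \<and>
        frontier P = (\<Union>i<n. C i))"

end

theory Submission imports Defs begin

text \<open>Compactness of \<open>K\<close> keeps the poles uniformly separated, say by \<open>4\<delta>\<close>. If the
  residues are small compared with \<open>\<delta>\<close>, then near each pole \<open>b$j\<close> the map \<open>Rab a b\<close> is a
  small perturbation of \<open>a$j / (z - b$j)\<close>, and a contraction argument in the rescaled variable
  \<open>(z - b$j) / a$j\<close> yields injective holomorphic inverse branches on \<open>norm w > 1/2\<close>. The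
  frontier of the preimage of the disc is the level set \<open>norm (Rab a b z) = 1\<close>, which is the
  union of the images of the unit circle under these \<open>n\<close> branches: disjoint analytic Jordan
  curves. The preimage is connected because moving a point radially away from a nearby pole
  keeps it in the preimage, so every point is joined inside the preimage by a segment to the
  image of the (connected) complement of the poles under this radial push.\<close>

lemma compact_pos_imp_uniform_pos:
  fixes S :: "real set"
  assumes "compact S" and "\<And>x. x \<in> S \<Longrightarrow> 0 < x"
  shows "\<exists>d>0. \<forall>x\<in>S. d \<le> x"
proof (cases "S = {}")
  case False
  then obtain m where "m \<in> S" "\<forall>x\<in>S. m \<le> x"
    using compact_attains_inf[OF assms(1)] by blast
  then show ?thesis using assms(2) by blast
qed (auto intro: exI[of _ 1])

lemma compact_config_space_separated:
  fixes K :: "(complex ^ 'n) set"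
  assumes "compact K" and "K \<subseteq> config_space"
  shows "\<exists>D>0. \<forall>b\<in>K. \<forall>i k. i \<noteq> k \<longrightarrow> D \<le> norm (b$i - b$k)"
proof -
  define dist_pairs where
    "dist_pairs = (\<Union>(i, k)\<in>{(i, k). i \<noteq> (k::'n)}. (\<lambda>b. norm (b$i - b$k)) ` K)"
  have "compact dist_pairs"
    unfolding dist_pairs_def
    by (intro compact_UN) (auto intro!: compact_continuous_image continuous_intros assms(1))
  moreover have "0 < x" if "x \<in> dist_pairs" for x
    using that assms(2) by (auto simp: dist_pairs_def config_space_def)
  ultimately obtain D where "D > 0" "\<forall>x\<in>dist_pairs. D \<le> x"
    using compact_pos_imp_uniform_pos by blast
  then show ?thesis unfolding dist_pairs_def by fastforce
qed

locale small_residues =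
  fixes a b :: "complex ^ 'n" and \<delta> :: real
  assumes delta_pos: "0 < \<delta>"
    and poles_separated: "\<And>i k. i \<noteq> k \<Longrightarrow> 4 * \<delta> \<le> norm (b$i - b$k)"
    and residue_nonzero: "\<And>j. a$j \<noteq> 0"
    and residues_small: "\<And>j. real CARD('n) * norm (a$j) \<le> \<delta> / 16"
begin

lemma sum_norm_residues_le: "(\<Sum>k\<in>A. norm (a$k)) \<le> \<delta> / 16"
proof -
  have "(\<Sum>k\<in>A. norm (a$k)) \<le> (\<Sum>k\<in>UNIV. norm (a$k))"
    by (rule sum_mono2) auto
  also have "\<dots> \<le> (\<Sum>k\<in>(UNIV::'n set). \<delta> / 16 / real CARD('n))"
    using residues_small by (intro sum_mono) (simp add: field_simps mult.commute)
  also have "\<dots> = \<delta> / 16" by simp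
  finally show ?thesis .
qed

lemma norm_residue_le: "norm (a$j) \<le> \<delta> / 16"
  using sum_norm_residues_le[of "{j}"] by simp

lemma weighted_sum_residues_le:
  assumes "0 \<le> B" and "\<And>k. k \<in> A \<Longrightarrow> f k \<le> B"
  shows "(\<Sum>k\<in>A. norm (a$k) * f k) \<le> \<delta> / 16 * B"
proof -
  have "(\<Sum>k\<in>A. norm (a$k) * f k) \<le> (\<Sum>k\<in>A. norm (a$k)) * B"
    unfolding sum_distrib_right using assms(2) by (intro sum_mono mult_left_mono) auto
  also have "\<dots> \<le> \<delta> / 16 * B"
    using sum_norm_residues_le assms(1) by (rule mult_right_mono)
  finally show ?thesis .
qed

lemma dist_other_pole_ge:
  assumes "norm (z - b$j) \<le> \<delta>" and "k \<noteq> j"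
  shows "3 * \<delta> \<le> norm (z - b$k)"
proof -
  have "4 * \<delta> \<le> norm ((z - b$k) - (z - b$j))"
    using poles_separated[OF assms(2)] by (simp add: norm_minus_commute)
  also have "\<dots> \<le> norm (z - b$j) + norm (z - b$k)"
    using norm_triangle_ineq4[of "z - b$k" "z - b$j"] by simp
  finally show ?thesis using assms(1) by simp
qed

lemma norm_Rab_le_far_from_poles:
  assumes "\<And>k. \<delta> \<le> norm (z - b$k)"
  shows "norm (Rab a b z) \<le> 1/16"
proof -
  have "norm (Rab a b z) \<le> (\<Sum>k\<in>UNIV. norm (a$k) * (1 / norm (z - b$k)))"
    unfolding Rab_def by (rule order_trans[OF norm_sum]) (simp add: norm_divide)
  also have "\<dots> \<le> \<delta> / 16 * (1 / \<delta>)"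
    using assms delta_pos by (intro weighted_sum_residues_le) (auto intro!: frac_le)
  finally show ?thesis using delta_pos by simp
qed

definition Rab_rest :: "'n \<Rightarrow> complex \<Rightarrow> complex" where
  "Rab_rest j z = (\<Sum>k\<in>UNIV-{j}. a$k / (z - b$k))"

lemma Rab_eq_principal_part_plus_rest: "Rab a b z = a$j / (z - b$j) + Rab_rest j z"
  unfolding Rab_def Rab_rest_def by (simp add: sum.remove)

lemma norm_Rab_rest_le:
  assumes "norm (z - b$j) \<le> \<delta>"
  shows "norm (Rab_rest j z) \<le> 1/48"
proof -
  have "norm (Rab_rest j z) \<le> (\<Sum>k\<in>UNIV-{j}. norm (a$k) * (1 / norm (z - b$k)))"
    unfolding Rab_rest_def by (rule order_trans[OF norm_sum]) (simp add: norm_divide)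
  also have "\<dots> \<le> \<delta> / 16 * (1 / (3 * \<delta>))"
    using dist_other_pole_ge[OF assms] delta_pos
    by (intro weighted_sum_residues_le) (auto intro!: frac_le)
  finally show ?thesis using delta_pos by simp
qed

lemma Rab_rest_lipschitz:
  assumes "norm (z - b$j) \<le> \<delta>" and "norm (z' - b$j) \<le> \<delta>"
  shows "norm (Rab_rest j z - Rab_rest j z') \<le> norm (z - z') / (144 * \<delta>)"
proof -
  have term_eq: "norm (a$k / (z - b$k) - a$k / (z' - b$k))
      = norm (a$k) * (norm (z - z') / (norm (z - b$k) * norm (z' - b$k)))" if "k \<noteq> j" for k
  proof -
    have "z - b$k \<noteq> 0" "z' - b$k \<noteq> 0"
      using dist_other_pole_ge[OF _ that] assms delta_pos by force+
    then have "a$k / (z - b$k) - a$k / (z' - b$k) = a$k * (z' - z) / ((z - b$k) * (z' - b$k))"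
      by (simp add: field_simps)
    then show ?thesis by (simp add: norm_mult norm_divide norm_minus_commute)
  qed
  have denom_ge: "9 * \<delta>\<^sup>2 \<le> norm (z - b$k) * norm (z' - b$k)" if "k \<noteq> j" for k
    using mult_mono[OF dist_other_pole_ge[OF assms(1) that] dist_other_pole_ge[OF assms(2) that]]
      delta_pos by (simp add: power2_eq_square)
  have "norm (Rab_rest j z - Rab_rest j z')
      \<le> (\<Sum>k\<in>UNIV-{j}. norm (a$k / (z - b$k) - a$k / (z' - b$k)))"
    unfolding Rab_rest_def sum_subtractf[symmetric] by (rule norm_sum)
  also have "\<dots> = (\<Sum>k\<in>UNIV-{j}. norm (a$k) * (norm (z - z') / (norm (z - b$k) * norm (z' - b$k))))"
    using term_eq by (intro sum.cong) auto
  also have "\<dots> \<le> \<delta> / 16 * (norm (z - z') / (9 * \<delta>\<^sup>2))"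
    using denom_ge delta_pos by (intro weighted_sum_residues_le) (auto intro!: frac_le)
  also have "\<dots> = norm (z - z') / (144 * \<delta>)"
    using delta_pos by (simp add: power2_eq_square)
  finally show ?thesis .
qed

text \<open>Writing \<open>z = b$j + a$j * u\<close>, the equation \<open>Rab a b z = w\<close> reads
  \<open>u = 1 / (w - Rab_rest j z)\<close>. For \<open>norm w \<ge> 1/2\<close> the right-hand side is a contraction
  of \<open>cball 0 4\<close> in \<open>u\<close>; its fixed point gives a local inverse of \<open>Rab a b\<close> near \<open>b$j\<close>.\<close>

definition branch_contraction :: "'n \<Rightarrow> complex \<Rightarrow> complex \<Rightarrow> complex" where
  "branch_contraction j w u = 1 / (w - Rab_rest j (b$j + a$j * u))"

lemma dist_pole_scaled_le:
  assumes "norm u \<le> 4"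
  shows "norm ((b$j + a$j * u) - b$j) \<le> \<delta>"
proof -
  have "norm (a$j * u) \<le> \<delta> / 16 * 4"
    unfolding norm_mult using assms norm_residue_le delta_pos by (intro mult_mono) auto
  then show ?thesis using delta_pos by simp
qed

lemma branch_denominator_ge:
  assumes "1/2 \<le> norm w" and "norm u \<le> 4"
  shows "1/4 \<le> norm (w - Rab_rest j (b$j + a$j * u))"
  using norm_Rab_rest_le[OF dist_pole_scaled_le[OF assms(2), of j]] assms(1)
    norm_triangle_ineq2[of w "Rab_rest j (b$j + a$j * u)"]
  by linarith

lemma norm_branch_contraction_le:
  assumes "1/2 \<le> norm w" and "norm u \<le> 4"
  shows "norm (branch_contraction j w u) \<le> 4"
  using branch_denominator_ge[OF assms, of j]
  unfolding branch_contraction_def norm_divide by (simp add: divide_le_eq)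

lemma branch_contraction_lipschitz:
  assumes "1/2 \<le> norm w" and "norm u \<le> 4" and "norm u' \<le> 4"
  shows "norm (branch_contraction j w u - branch_contraction j w u') \<le> 1/2 * norm (u - u')"
proof -
  define A where "A = w - Rab_rest j (b$j + a$j * u)"
  define B where "B = w - Rab_rest j (b$j + a$j * u')"
  have A: "1/4 \<le> norm A" and B: "1/4 \<le> norm B"
    unfolding A_def B_def using branch_denominator_ge assms by auto
  have "norm (B - A) \<le> norm ((b$j + a$j * u) - (b$j + a$j * u')) / (144 * \<delta>)"
    unfolding A_def B_def
    using Rab_rest_lipschitz[OF dist_pole_scaled_le[OF assms(2)] dist_pole_scaled_le[OF assms(3)]]
    by simp
  also have "\<dots> = norm (a$j) * norm (u - u') / (144 * \<delta>)"
    by (simp add: norm_mult[symmetric] right_diff_distrib)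
  also have "\<dots> \<le> \<delta> / 16 * norm (u - u') / (144 * \<delta>)"
    using delta_pos norm_residue_le by (intro divide_right_mono mult_right_mono) auto
  also have "\<dots> = norm (u - u') / 2304"
    using delta_pos by simp
  finally have BA: "norm (B - A) \<le> norm (u - u') / 2304" .
  have AB: "1/16 \<le> norm (A * B)"
    using mult_mono[OF A B] unfolding norm_mult by simp
  have "A \<noteq> 0" "B \<noteq> 0" using A B by auto
  then have "branch_contraction j w u - branch_contraction j w u' = (B - A) / (A * B)"
    unfolding branch_contraction_def A_def[symmetric] B_def[symmetric]
    by (simp add: diff_frac_eq)
  then have "norm (branch_contraction j w u - branch_contraction j w u') = norm (B - A) / norm (A * B)"
    by (simp add: norm_divide)
  also have "\<dots> \<le> (norm (u - u') / 2304) / (1/16)"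
    using BA AB by (intro frac_le) auto
  also have "\<dots> \<le> 1/2 * norm (u - u')" by simp
  finally show ?thesis .
qed

lemma branch_contraction_unique_fixpoint:
  assumes "1/2 \<le> norm w"
  shows "\<exists>!u. u \<in> cball 0 4 \<and> branch_contraction j w u = u"
proof -
  have "\<exists>!u\<in>cball 0 4. branch_contraction j w u = u"
  proof (rule Banach_fix[where c = "1/2"])
    show "branch_contraction j w ` cball 0 4 \<subseteq> cball 0 4"
      using norm_branch_contraction_le[OF assms] by auto
    show "dist (branch_contraction j w x) (branch_contraction j w y) \<le> 1/2 * dist x y"
      if "x \<in> cball 0 4" "y \<in> cball 0 4" for x y
      using branch_contraction_lipschitz[OF assms, of x y] that by (simp add: dist_norm)
  qed (auto simp: complete_eq_closed)
  then show ?thesis by auto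
qed

definition branch_param :: "'n \<Rightarrow> complex \<Rightarrow> complex" where
  "branch_param j w = (THE u. u \<in> cball 0 4 \<and> branch_contraction j w u = u)"

definition inverse_branch :: "'n \<Rightarrow> complex \<Rightarrow> complex" where
  "inverse_branch j w = b$j + a$j * branch_param j w"

lemma branch_param_fixpoint:
  assumes "1/2 \<le> norm w"
  shows "norm (branch_param j w) \<le> 4" and "branch_contraction j w (branch_param j w) = branch_param j w"
  using theI'[OF branch_contraction_unique_fixpoint[OF assms, of j]]
  unfolding branch_param_def by auto

lemma branch_param_unique:
  assumes "1/2 \<le> norm w" and "norm u \<le> 4" and "branch_contraction j w u = u"
  shows "u = branch_param j w"
  using branch_contraction_unique_fixpoint[OF assms(1), of j] branch_param_fixpoint[OF assms(1), of j]
    assms(2,3)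
  by auto

lemma branch_param_eq:
  assumes "1/2 \<le> norm w"
  shows "branch_param j w = 1 / (w - Rab_rest j (inverse_branch j w))"
    and "w - Rab_rest j (inverse_branch j w) \<noteq> 0"
proof -
  show "w - Rab_rest j (inverse_branch j w) \<noteq> 0"
    using branch_denominator_ge[OF assms branch_param_fixpoint(1)[OF assms, of j], of j]
    unfolding inverse_branch_def by auto
  show "branch_param j w = 1 / (w - Rab_rest j (inverse_branch j w))"
    using branch_param_fixpoint(2)[OF assms, of j]
    unfolding branch_contraction_def inverse_branch_def by simp
qed

lemma Rab_inverse_branch:
  assumes "1/2 \<le> norm w"
  shows "Rab a b (inverse_branch j w) = w"
proof -
  define X where "X = w - Rab_rest j (inverse_branch j w)"
  have "branch_param j w = 1 / X" "X \<noteq> 0"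
    using branch_param_eq[OF assms, of j] unfolding X_def by auto
  then have "a$j / (inverse_branch j w - b$j) = X"
    using residue_nonzero[of j] by (simp add: inverse_branch_def)
  then show ?thesis using Rab_eq_principal_part_plus_rest[of _ j] unfolding X_def by simp
qed

lemma inverse_branch_near_pole:
  assumes "1/2 \<le> norm w"
  shows "norm (inverse_branch j w - b$j) \<le> \<delta>"
  unfolding inverse_branch_def using dist_pole_scaled_le[OF branch_param_fixpoint(1)[OF assms]] .

lemma inverse_branch_ne_pole:
  assumes "1/2 \<le> norm w"
  shows "inverse_branch j w \<noteq> b$k"
proof (cases "k = j")
  case True
  have "branch_param j w \<noteq> 0"
    using branch_param_eq[OF assms, of j] by simp
  then show ?thesis using True residue_nonzero[of j] by (simp add: inverse_branch_def)
next
  case False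
  then show ?thesis
    using dist_other_pole_ge[OF inverse_branch_near_pole[OF assms] False] delta_pos by auto
qed

lemma branch_param_lipschitz:
  assumes "1/2 \<le> norm w" and "1/2 \<le> norm w'"
  shows "norm (branch_param j w - branch_param j w') \<le> 32 * norm (w - w')"
proof -
  define u where "u = branch_param j w"
  define u' where "u' = branch_param j w'"
  have u: "norm u \<le> 4" "branch_contraction j w u = u"
    using branch_param_fixpoint[OF assms(1)] u_def by auto
  have u': "norm u' \<le> 4" "branch_contraction j w' u' = u'"
    using branch_param_fixpoint[OF assms(2)] u'_def by auto
  define H where "H = Rab_rest j (b$j + a$j * u')"
  have A: "1/4 \<le> norm (w - H)" and B: "1/4 \<le> norm (w' - H)"
    unfolding H_def using branch_denominator_ge u'(1) assms by auto
  have "w - H \<noteq> 0" "w' - H \<noteq> 0" using A B by auto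
  then have "branch_contraction j w u' - branch_contraction j w' u' = (w' - w) / ((w - H) * (w' - H))"
    unfolding branch_contraction_def H_def[symmetric]
    by (simp add: diff_frac_eq)
  then have "norm (branch_contraction j w u' - branch_contraction j w' u')
      = norm (w - w') / (norm (w - H) * norm (w' - H))"
    by (simp add: norm_divide norm_mult norm_minus_commute)
  also have "\<dots> \<le> norm (w - w') / (1/16)"
    using mult_mono[OF A B] by (intro frac_le) auto
  finally have change_w: "norm (branch_contraction j w u' - branch_contraction j w' u') \<le> 16 * norm (w - w')"
    by simp
  have "u - u' = (branch_contraction j w u - branch_contraction j w u')
      + (branch_contraction j w u' - branch_contraction j w' u')"
    using u(2) u'(2) by simp
  then have "norm (u - u') \<le> norm (branch_contraction j w u - branch_contraction j w u')
      + norm (branch_contraction j w u' - branch_contraction j w' u')"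
    by (metis norm_triangle_ineq)
  then have "norm (u - u') \<le> 1/2 * norm (u - u') + 16 * norm (w - w')"
    using branch_contraction_lipschitz[OF assms(1) u(1) u'(1), of j] change_w by linarith
  then show ?thesis unfolding u_def u'_def by linarith
qed

lemma inverse_branch_lipschitz:
  assumes "1/2 \<le> norm w" and "1/2 \<le> norm w'"
  shows "norm (inverse_branch j w - inverse_branch j w') \<le> 32 * norm (a$j) * norm (w - w')"
proof -
  have "norm (inverse_branch j w - inverse_branch j w')
      = norm (a$j) * norm (branch_param j w - branch_param j w')"
    unfolding inverse_branch_def by (simp add: norm_mult[symmetric] right_diff_distrib)
  also have "\<dots> \<le> norm (a$j) * (32 * norm (w - w'))"
    using branch_param_lipschitz[OF assms] by (rule mult_left_mono) simp
  finally show ?thesis by simp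
qed

definition Rab_deriv :: "complex \<Rightarrow> complex" where
  "Rab_deriv z = (\<Sum>k\<in>UNIV. - a$k / (z - b$k)\<^sup>2)"

lemma Rab_has_field_derivative:
  assumes "\<And>k. z \<noteq> b$k"
  shows "(Rab a b has_field_derivative Rab_deriv z) (at z)"
proof -
  have "Rab a b = (\<lambda>z. \<Sum>k\<in>UNIV. a$k / (z - b$k))"
    by (simp add: Rab_def fun_eq_iff)
  moreover have "((\<lambda>z. a$k / (z - b$k)) has_field_derivative - a$k / (z - b$k)\<^sup>2) (at z)" for k
    using assms[of k]
    by (auto intro!: derivative_eq_intros simp: field_simps power2_eq_square)
  ultimately show ?thesis
    unfolding Rab_deriv_def by (simp add: DERIV_sum)
qed

lemma norm_Rab_deriv_rest_lt:
  assumes "norm (z - b$j) \<le> \<delta>"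
  shows "norm (\<Sum>k\<in>UNIV-{j}. - a$k / (z - b$k)\<^sup>2) < 1 / \<delta>"
proof -
  have far: "(3 * \<delta>)\<^sup>2 \<le> (norm (z - b$k))\<^sup>2" if "k \<noteq> j" for k
    using dist_other_pole_ge[OF assms that] delta_pos by (intro power_mono) auto
  have "norm (\<Sum>k\<in>UNIV-{j}. - a$k / (z - b$k)\<^sup>2)
      \<le> (\<Sum>k\<in>UNIV-{j}. norm (a$k) * (1 / (norm (z - b$k))\<^sup>2))"
    by (rule order_trans[OF norm_sum]) (simp add: norm_divide norm_power)
  also have "\<dots> \<le> \<delta> / 16 * (1 / (3 * \<delta>)\<^sup>2)"
    using far delta_pos by (intro weighted_sum_residues_le) (auto intro!: frac_le)
  also have "\<dots> < 1 / \<delta>"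
    using delta_pos by (simp add: field_simps power2_eq_square)
  finally show ?thesis .
qed

lemma Rab_deriv_inverse_branch_nonzero:
  assumes "1/2 \<le> norm w"
  shows "Rab_deriv (inverse_branch j w) \<noteq> 0"
proof -
  define z where "z = inverse_branch j w"
  define u where "u = branch_param j w"
  have "z \<noteq> b$j" unfolding z_def by (rule inverse_branch_ne_pole[OF assms])
  then have "u \<noteq> 0" by (simp add: z_def u_def inverse_branch_def)
  have "norm (a$j) * (norm u)\<^sup>2 \<le> \<delta> / 16 * 4\<^sup>2"
    using norm_residue_le[of j] branch_param_fixpoint(1)[OF assms, of j] delta_pos
    unfolding u_def by (intro mult_mono power_mono) auto
  moreover have "norm (- a$j / (z - b$j)\<^sup>2) = 1 / (norm (a$j) * (norm u)\<^sup>2)"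
    using residue_nonzero[of j] \<open>u \<noteq> 0\<close>
    by (simp add: z_def u_def inverse_branch_def norm_divide norm_mult norm_power power2_eq_square)
  ultimately have "1 / \<delta> \<le> norm (- a$j / (z - b$j)\<^sup>2)"
    using residue_nonzero[of j] \<open>u \<noteq> 0\<close> delta_pos by (simp add: frac_le)
  then have "norm (\<Sum>k\<in>UNIV-{j}. - a$k / (z - b$k)\<^sup>2) < norm (- a$j / (z - b$j)\<^sup>2)"
    using norm_Rab_deriv_rest_lt[OF inverse_branch_near_pole[OF assms, of j]] unfolding z_def
    by linarith
  then have "- a$j / (z - b$j)\<^sup>2 + (\<Sum>k\<in>UNIV-{j}. - a$k / (z - b$k)\<^sup>2) \<noteq> 0"
    by (auto simp: add_eq_0_iff)
  then show ?thesis
    unfolding z_def[symmetric] Rab_deriv_def by (simp add: sum.remove)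
qed

lemma inverse_branch_continuous: "continuous_on (- cball 0 (1/2)) (inverse_branch j)"
proof (rule lipschitz_on_continuous_on)
  show "(32 * norm (a$j))-lipschitz_on (- cball 0 (1/2)) (inverse_branch j)"
    by (rule lipschitz_onI) (auto simp: dist_norm inverse_branch_lipschitz)
qed

lemma inverse_branch_holomorphic: "inverse_branch j holomorphic_on - cball 0 (1/2)"
  unfolding holomorphic_on_open[OF open_Compl[OF closed_cball]]
proof
  fix w :: complex
  assume w: "w \<in> - cball 0 (1/2)"
  then have "1/2 \<le> norm w" by auto
  have "(inverse_branch j has_field_derivative inverse (Rab_deriv (inverse_branch j w))) (at w)"
  proof (rule has_field_derivative_inverse_basic[where f = "Rab a b" and t = "- cball 0 (1/2)"])
    show "(Rab a b has_field_derivative Rab_deriv (inverse_branch j w)) (at (inverse_branch j w))"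
      using Rab_has_field_derivative inverse_branch_ne_pole[OF \<open>1/2 \<le> norm w\<close>] by blast
    show "Rab_deriv (inverse_branch j w) \<noteq> 0"
      using Rab_deriv_inverse_branch_nonzero[OF \<open>1/2 \<le> norm w\<close>] .
    show "continuous (at w) (inverse_branch j)"
      using inverse_branch_continuous w continuous_on_eq_continuous_at[OF open_Compl[OF closed_cball]]
      by blast
    show "\<And>z. z \<in> - cball 0 (1/2) \<Longrightarrow> Rab a b (inverse_branch j z) = z"
      using Rab_inverse_branch by auto
  qed (use w in auto)
  then show "\<exists>f'. (inverse_branch j has_field_derivative f') (at w)" by blast
qed

lemma inverse_branch_inj: "inj_on (inverse_branch j) (- cball 0 (1/2))"
  by (rule inj_on_inverseI[where g = "Rab a b"]) (auto simp: Rab_inverse_branch)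

lemma analytic_jordan_curve_inverse_branch: "analytic_jordan_curve (inverse_branch j ` sphere 0 1)"
  unfolding analytic_jordan_curve_def
  using inverse_branch_holomorphic inverse_branch_inj by (intro exI[of _ "- cball 0 (1/2)"]) auto

abbreviation poles :: "complex set" where
  "poles \<equiv> range (\<lambda>k. b$k)"

abbreviation preimage :: "complex set" where
  "preimage \<equiv> Rab_preimage_disc a b"

lemma open_complement_poles: "open (- poles)"
  by (intro open_Compl finite_imp_closed) auto

lemma not_pole_if_far_from_poles:
  assumes "\<forall>k. norm (a$k) / 2 \<le> norm (z - b$k)"
  shows "z \<notin> poles"
proof
  assume "z \<in> poles"
  then obtain k where "z = b$k" by auto
  then have "norm (a$k) \<le> 0"
    using spec[OF assms, of k] by simp
  then show False using residue_nonzero[of k] by simp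
qed

lemma Rab_continuous: "continuous_on (- poles) (Rab a b)"
  unfolding Rab_def by (intro continuous_intros) auto

lemma preimage_eq: "preimage = (- poles) \<inter> Rab a b -` ball 0 1"
  unfolding Rab_preimage_disc_def by auto

lemma open_preimage: "open preimage"
  unfolding preimage_eq
  by (rule continuous_open_preimage[OF Rab_continuous open_complement_poles]) auto

lemma norm_Rab_gt_one_near_pole:
  assumes "z \<noteq> b$k" and "norm (z - b$k) < norm (a$k) / 2"
  shows "1 < norm (Rab a b z)"
proof -
  have "norm (z - b$k) \<le> \<delta>"
    using assms(2) norm_residue_le[of k] delta_pos by linarith
  then have rest: "norm (Rab_rest k z) \<le> 1/48"
    by (rule norm_Rab_rest_le)
  have "2 < norm (a$k) / norm (z - b$k)"
    using assms by (simp add: field_simps)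
  then have "2 < norm (a$k / (z - b$k))"
    by (simp add: norm_divide)
  then show ?thesis
    using Rab_eq_principal_part_plus_rest[of z k] rest
      norm_diff_ineq[of "a$k / (z - b$k)" "Rab_rest k z"] by simp
qed

lemma closure_preimage_subset:
  "closure preimage \<subseteq> {z. \<forall>k. norm (a$k) / 2 \<le> norm (z - b$k)} \<inter> Rab a b -` cball 0 1"
proof (rule closure_minimal)
  define A where "A = {z. \<forall>k. norm (a$k) / 2 \<le> norm (z - b$k)}"
  have "A \<subseteq> - poles"
    using not_pole_if_far_from_poles unfolding A_def by blast
  moreover have "closed A"
    unfolding A_def by (intro closed_Collect_all closed_Collect_le continuous_intros)
  ultimately show "closed (A \<inter> Rab a b -` cball 0 1)"
    by (intro continuous_closed_preimage continuous_on_subset[OF Rab_continuous]) auto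
  show "preimage \<subseteq> A \<inter> Rab a b -` cball 0 1"
  proof
    fix z
    assume z: "z \<in> preimage"
    then have "norm (a$k) / 2 \<le> norm (z - b$k)" for k
      using norm_Rab_gt_one_near_pole[of z k] unfolding Rab_preimage_disc_def by force
    then show "z \<in> A \<inter> Rab a b -` cball 0 1"
      using z unfolding A_def Rab_preimage_disc_def by auto
  qed
qed

lemma frontier_preimage_subset:
  "frontier preimage \<subseteq> {z. z \<notin> poles \<and> norm (Rab a b z) = 1}"
proof
  fix z
  assume "z \<in> frontier preimage"
  then have "z \<in> closure preimage" and "z \<notin> preimage"
    unfolding frontier_def interior_open[OF open_preimage] by auto
  moreover have "z \<notin> poles" and "norm (Rab a b z) \<le> 1"
    using closure_preimage_subset \<open>z \<in> closure preimage\<close> not_pole_if_far_from_poles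
    by auto
  ultimately show "z \<in> {z. z \<notin> poles \<and> norm (Rab a b z) = 1}"
    unfolding Rab_preimage_disc_def by auto
qed

lemma unit_level_set_subset_branches:
  assumes "z \<notin> poles" and "norm (Rab a b z) = 1"
  shows "\<exists>j. z \<in> inverse_branch j ` sphere 0 1"
proof -
  obtain j where j: "norm (z - b$j) < \<delta>"
    using norm_Rab_le_far_from_poles assms(2) by (force simp: not_less)
  define w where "w = Rab a b z"
  define u where "u = (z - b$j) / a$j"
  have z: "z = b$j + a$j * u" and "u \<noteq> 0"
    using residue_nonzero[of j] assms(1) unfolding u_def by auto
  have "norm (Rab_rest j z) \<le> 1/48"
    using norm_Rab_rest_le j by simp
  have inv_u: "1 / u = w - Rab_rest j z"
    unfolding w_def Rab_eq_principal_part_plus_rest[of z j] u_def by simp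
  then have "1 - 1/48 \<le> norm (1 / u)"
    using assms(2) \<open>norm (Rab_rest j z) \<le> 1/48\<close> norm_triangle_ineq2[of w "Rab_rest j z"]
    unfolding w_def by simp
  then have "norm u \<le> 4"
    using \<open>u \<noteq> 0\<close> by (simp add: norm_divide field_simps)
  moreover have "branch_contraction j w u = u"
    unfolding branch_contraction_def z[symmetric] inv_u[symmetric] by simp
  ultimately have "u = branch_param j w"
    using assms(2) unfolding w_def by (intro branch_param_unique) auto
  then have "z = inverse_branch j w"
    unfolding inverse_branch_def z by simp
  moreover have "w \<in> sphere 0 1"
    using assms(2) unfolding w_def by simp
  ultimately show ?thesis by blast
qed

lemma inverse_branch_in_frontier:
  assumes "norm w = 1"
  shows "inverse_branch j w \<in> frontier preimage"
proof -
  have "inverse_branch j w \<notin> preimage"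
    using Rab_inverse_branch[of w j] assms unfolding Rab_preimage_disc_def by auto
  moreover have "inverse_branch j w \<in> closure preimage"
    unfolding closure_approachable
  proof (intro allI impI)
    fix e :: real
    assume "0 < e"
    have "0 < norm (a$j)" using residue_nonzero by simp
    define t where "t = min (1/2) (e / (64 * norm (a$j)))"
    have t: "0 < t" "t \<le> 1/2" "t \<le> e / (64 * norm (a$j))"
      unfolding t_def using \<open>0 < e\<close> \<open>0 < norm (a$j)\<close> by auto
    define w' where "w' = of_real (1 - t) * w"
    have "norm w' = 1 - t"
      unfolding w'_def norm_mult norm_of_real using assms t by simp
    have "w' - w = - (of_real t * w)"
      unfolding w'_def by (simp add: algebra_simps)
    then have "norm (w' - w) = t"
      using assms t by (simp add: norm_mult)
    have "inverse_branch j w' \<in> preimage"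
      using Rab_inverse_branch[of w' j] inverse_branch_ne_pole[of w' j] \<open>norm w' = 1 - t\<close> t
      unfolding Rab_preimage_disc_def by auto
    moreover have "dist (inverse_branch j w') (inverse_branch j w) \<le> 32 * norm (a$j) * t"
      using inverse_branch_lipschitz[of w' w j] \<open>norm w' = 1 - t\<close> \<open>norm (w' - w) = t\<close> assms t
      by (simp add: dist_norm)
    moreover have "32 * norm (a$j) * t < e"
      using t \<open>0 < e\<close> \<open>0 < norm (a$j)\<close> by (simp add: field_simps)
    ultimately show "\<exists>y\<in>preimage. dist y (inverse_branch j w) < e"
      by force
  qed
  ultimately show ?thesis
    unfolding frontier_def interior_open[OF open_preimage] by auto
qed

lemma frontier_preimage_eq: "frontier preimage = (\<Union>j. inverse_branch j ` sphere 0 1)"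
  using frontier_preimage_subset unit_level_set_subset_branches inverse_branch_in_frontier
  by fastforce

lemma far_from_poles_in_preimage:
  assumes "\<And>k. \<delta> \<le> norm (z - b$k)"
  shows "z \<in> preimage"
proof -
  have "z \<noteq> b$k" for k
    using assms[of k] delta_pos by auto
  then show ?thesis
    using norm_Rab_le_far_from_poles[OF assms] unfolding Rab_preimage_disc_def by simp
qed

lemma radial_dist_le:
  assumes "1 \<le> t" and "t * norm (z - b$j) \<le> \<delta>"
  shows "norm (z - b$j) \<le> \<delta>" and "norm ((b$j + of_real t * (z - b$j)) - b$j) \<le> \<delta>"
proof -
  show "norm ((b$j + of_real t * (z - b$j)) - b$j) \<le> \<delta>"
    using assms by (simp add: norm_mult)
  have "norm (z - b$j) \<le> t * norm (z - b$j)"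
    using mult_right_mono[OF assms(1), of "norm (z - b$j)"] by simp
  then show "norm (z - b$j) \<le> \<delta>"
    using assms(2) by linarith
qed

lemma Rab_rest_radial_change_le:
  assumes "1 \<le> t" and "t * norm (z - b$j) \<le> \<delta>"
  shows "norm (Rab_rest j (b$j + of_real t * (z - b$j)) - Rab_rest j z) \<le> (1 - 1/t) / 144"
proof -
  define p where "p = b$j + of_real t * (z - b$j)"
  define r where "r = norm (z - b$j)"
  have "p - z = of_real (t - 1) * (z - b$j)"
    unfolding p_def by (simp add: algebra_simps)
  then have "norm (p - z) = \<bar>t - 1\<bar> * r"
    unfolding r_def by (simp only: norm_mult norm_of_real)
  then have "norm (Rab_rest j p - Rab_rest j z) \<le> (t - 1) * r / (144 * \<delta>)"
    using Rab_rest_lipschitz[OF radial_dist_le(2)[OF assms] radial_dist_le(1)[OF assms]] assms(1)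
    unfolding p_def by simp
  also have "\<dots> = (1 - 1/t) * (t * r) / (144 * \<delta>)"
    using assms(1) delta_pos by (simp add: field_simps)
  also have "\<dots> \<le> (1 - 1/t) * \<delta> / (144 * \<delta>)"
    using assms delta_pos unfolding r_def by (intro divide_right_mono mult_left_mono) auto
  also have "\<dots> = (1 - 1/t) / 144"
    using delta_pos by simp
  finally show ?thesis unfolding p_def .
qed

text \<open>Moving away from a pole along a ray inside its disc of radius \<open>\<delta>\<close> shrinks the
  principal part by the factor \<open>1/t\<close>, while the rest of \<open>Rab a b\<close> is small and almost
  constant there.\<close>

lemma norm_Rab_radial_le:
  assumes "1 \<le> t" and "t * norm (z - b$j) \<le> \<delta>"
  shows "norm (Rab a b (b$j + of_real t * (z - b$j))) \<le> norm (Rab a b z) / t + (1 - 1/t) / 36"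
proof -
  define p where "p = b$j + of_real t * (z - b$j)"
  define q where "q = 1 / t"
  have q: "0 < q" "q \<le> 1" unfolding q_def using assms(1) by auto
  have "a$j / (p - b$j) = of_real q * (a$j / (z - b$j))"
    unfolding p_def q_def using assms(1) by (simp add: field_simps)
  then have Rp: "Rab a b p
      = of_real q * Rab a b z + (Rab_rest j p - Rab_rest j z) + of_real (1 - q) * Rab_rest j z"
    using Rab_eq_principal_part_plus_rest[of p j] Rab_eq_principal_part_plus_rest[of z j]
    by (simp add: algebra_simps)
  have "norm (Rab a b p) \<le> norm (of_real q * Rab a b z) + norm (Rab_rest j p - Rab_rest j z)
      + norm (of_real (1 - q) * Rab_rest j z)"
    unfolding Rp by (rule order_trans[OF norm_triangle_ineq add_right_mono[OF norm_triangle_ineq]])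
  also have "\<dots> = q * norm (Rab a b z) + norm (Rab_rest j p - Rab_rest j z)
      + (1 - q) * norm (Rab_rest j z)"
    using q by (simp only: norm_mult norm_of_real)
  finally have "norm (Rab a b p)
      \<le> q * norm (Rab a b z) + norm (Rab_rest j p - Rab_rest j z) + (1 - q) * norm (Rab_rest j z)" .
  moreover have "norm (Rab_rest j p - Rab_rest j z) \<le> (1 - q) / 144"
    using Rab_rest_radial_change_le[OF assms] unfolding p_def q_def .
  moreover have "(1 - q) * norm (Rab_rest j z) \<le> (1 - q) / 48"
    using norm_Rab_rest_le[OF radial_dist_le(1)[OF assms]] q mult_left_mono[of _ "1/48" "1 - q"]
    by simp
  ultimately show ?thesis
    unfolding p_def[symmetric] q_def by argo
qed

lemma radial_push_in_preimage:
  assumes "z \<in> preimage" and "1 \<le> t" and "t * norm (z - b$j) \<le> \<delta>"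
  shows "b$j + of_real t * (z - b$j) \<in> preimage"
proof -
  define p where "p = b$j + of_real t * (z - b$j)"
  have "z \<noteq> b$j" and "norm (Rab a b z) < 1"
    using assms(1) unfolding Rab_preimage_disc_def by auto
  have "p \<noteq> b$k" for k
  proof (cases "k = j")
    case True
    then show ?thesis using \<open>z \<noteq> b$j\<close> assms(2) by (simp add: p_def)
  next
    case False
    then show ?thesis
      using dist_other_pole_ge[OF radial_dist_le(2)[OF assms(2,3)] False] delta_pos
      unfolding p_def by auto
  qed
  moreover have "norm (Rab a b z) / t + (1 - 1/t) / 36 < 1"
    using \<open>norm (Rab a b z) < 1\<close> assms(2) by (simp add: field_simps)
  ultimately show ?thesis
    using norm_Rab_radial_le[OF assms(2,3)] unfolding p_def Rab_preimage_disc_def by simp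
qed

text \<open>Since the discs of radius \<open>\<delta>\<close> about the poles are disjoint, at most one summand is
  nonzero: \<open>push_off\<close> moves each point of such a disc radially onto its boundary circle and
  fixes all other points.\<close>

definition push_off :: "complex \<Rightarrow> complex" where
  "push_off z = z + (\<Sum>k\<in>UNIV. of_real (max 0 (\<delta> - norm (z - b$k)) / norm (z - b$k)) * (z - b$k))"

lemma push_off_eq_self:
  assumes "\<And>k. \<delta> \<le> norm (z - b$k)"
  shows "push_off z = z"
proof -
  have "max 0 (\<delta> - norm (z - b$k)) = 0" for k
    using assms[of k] by simp
  then show ?thesis unfolding push_off_def by simp
qed

lemma push_off_near_pole:
  assumes "norm (z - b$j) < \<delta>" and "z \<noteq> b$j"
  shows "push_off z = b$j + of_real (\<delta> / norm (z - b$j)) * (z - b$j)"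
proof -
  have "max 0 (\<delta> - norm (z - b$k)) = 0" if "k \<noteq> j" for k
    using dist_other_pole_ge[OF _ that, of z] assms(1) delta_pos by simp
  then have "push_off z = z + of_real ((\<delta> - norm (z - b$j)) / norm (z - b$j)) * (z - b$j)"
    unfolding push_off_def using assms(1) by (simp add: sum.remove[of UNIV j])
  also have "\<dots> = b$j + of_real (\<delta> / norm (z - b$j)) * (z - b$j)"
    using assms(2) by (simp add: diff_divide_distrib algebra_simps)
  finally show ?thesis .
qed

lemma push_off_far_from_poles:
  assumes "z \<notin> poles"
  shows "\<delta> \<le> norm (push_off z - b$k)"
proof (cases "\<exists>j. norm (z - b$j) < \<delta>")
  case True
  then obtain j where j: "norm (z - b$j) < \<delta>" by blast
  have "z \<noteq> b$j" using assms by auto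
  have "push_off z - b$j = of_real (\<delta> / norm (z - b$j)) * (z - b$j)"
    using push_off_near_pole[OF j \<open>z \<noteq> b$j\<close>] by simp
  then have "norm (push_off z - b$j) = \<bar>\<delta> / norm (z - b$j)\<bar> * norm (z - b$j)"
    by (simp only: norm_mult norm_of_real)
  then have "norm (push_off z - b$j) = \<delta>"
    using \<open>z \<noteq> b$j\<close> delta_pos by simp
  then show ?thesis
    using dist_other_pole_ge[of "push_off z" j k] delta_pos by (cases "k = j") auto
next
  case False
  then show ?thesis
    using push_off_eq_self[of z] by (simp add: not_less)
qed

lemma segment_push_off_subset_preimage:
  assumes "z \<in> preimage"
  shows "closed_segment z (push_off z) \<subseteq> preimage"
proof (cases "\<exists>j. norm (z - b$j) < \<delta>")
  case True
  then obtain j where j: "norm (z - b$j) < \<delta>" by blast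
  define r where "r = norm (z - b$j)"
  have "z \<noteq> b$j" using assms unfolding Rab_preimage_disc_def by auto
  then have "0 < r" unfolding r_def by simp
  show ?thesis
  proof
    fix p
    assume "p \<in> closed_segment z (push_off z)"
    then obtain s where s: "0 \<le> s" "s \<le> 1" "p = (1 - s) *\<^sub>R z + s *\<^sub>R push_off z"
      unfolding in_segment by blast
    define t where "t = 1 + s * (\<delta> / r - 1)"
    have "p = b$j + of_real t * (z - b$j)"
      unfolding s(3) push_off_near_pole[OF j \<open>z \<noteq> b$j\<close>] t_def r_def scaleR_conv_of_real
      by (simp add: algebra_simps)
    moreover have "1 \<le> t"
    proof -
      have "1 \<le> \<delta> / r"
        using j \<open>0 < r\<close> unfolding r_def by simp
      then have "0 \<le> s * (\<delta> / r - 1)"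
        using s by simp
      then show ?thesis unfolding t_def by linarith
    qed
    moreover have "t * r \<le> \<delta>"
    proof -
      have "t * r = r + s * (\<delta> - r)"
        unfolding t_def using \<open>0 < r\<close> by (simp add: field_simps)
      also have "\<dots> \<le> r + 1 * (\<delta> - r)"
        using s j unfolding r_def by (intro add_left_mono mult_right_mono) auto
      finally show ?thesis by simp
    qed
    ultimately show "p \<in> preimage"
      using radial_push_in_preimage[OF assms] unfolding r_def by simp
  qed
next
  case False
  then show ?thesis
    using push_off_eq_self[of z] assms by (simp add: not_less)
qed

lemma push_off_continuous: "continuous_on (- poles) push_off"
  unfolding push_off_def by (intro continuous_intros) auto

lemma connected_complement_poles: "connected (- poles)"
  by (intro path_connected_imp_connected path_connected_complement_countable countable_finite) auto

lemma complement_poles_nonempty: "- poles \<noteq> {}"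
proof
  assume "- poles = {}"
  then have "poles = UNIV" by auto
  moreover have "finite poles" by simp
  ultimately show False using infinite_UNIV_char_0[where 'a = complex] by simp
qed

lemma connected_preimage: "connected preimage"
proof -
  define core where "core = push_off ` (- poles)"
  have "connected core"
    unfolding core_def using push_off_continuous connected_complement_poles
    by (rule connected_continuous_image)
  have "core \<subseteq> preimage"
    unfolding core_def using push_off_far_from_poles far_from_poles_in_preimage by blast
  have "core \<noteq> {}"
    unfolding core_def using complement_poles_nonempty by simp
  have "preimage = (\<Union>z\<in>preimage. core \<union> closed_segment z (push_off z))"
    using \<open>core \<subseteq> preimage\<close> segment_push_off_subset_preimage by blast
  moreover have "connected (\<Union>z\<in>preimage. core \<union> closed_segment z (push_off z))"
  proof (rule connected_Union)
    show "connected S" if S: "S \<in> (\<lambda>z. core \<union> closed_segment z (push_off z)) ` preimage" for S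
    proof -
      obtain z where z: "z \<in> preimage" "S = core \<union> closed_segment z (push_off z)"
        using S by blast
      then have "push_off z \<in> core \<inter> closed_segment z (push_off z)"
        unfolding core_def Rab_preimage_disc_def by auto
      then show ?thesis
        unfolding z(2) using \<open>connected core\<close> by (intro connected_Un) auto
    qed
    show "\<Inter> ((\<lambda>z. core \<union> closed_segment z (push_off z)) ` preimage) \<noteq> {}"
      using \<open>core \<noteq> {}\<close> by blast
  qed
  ultimately show ?thesis by simp
qed

lemma inverse_branch_curves_disjoint:
  assumes "j \<noteq> k"
  shows "inverse_branch j ` sphere 0 1 \<inter> inverse_branch k ` sphere 0 1 = {}"
proof -
  have "inverse_branch j w \<noteq> inverse_branch k w'" if "norm w = 1" "norm w' = 1" for w w'
    using dist_other_pole_ge[OF inverse_branch_near_pole[of w j] \<open>j \<noteq> k\<close>[symmetric]]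
      inverse_branch_near_pole[of w' k] that delta_pos by auto
  then show ?thesis by auto
qed

lemma n_good_preimage: "n_good CARD('n) preimage"
proof -
  obtain enum where enum: "bij_betw enum {..<CARD('n)} (UNIV :: 'n set)"
    using ex_bij_betw_nat_finite[of "UNIV :: 'n set"] by (auto simp: lessThan_atLeast0)
  define C where "C i = inverse_branch (enum i) ` sphere 0 1" for i
  have "\<forall>i<CARD('n). analytic_jordan_curve (C i)"
    unfolding C_def using analytic_jordan_curve_inverse_branch by blast
  moreover have "\<forall>i<CARD('n). \<forall>j<CARD('n). i \<noteq> j \<longrightarrow> C i \<inter> C j = {}"
    using inj_on_eq_iff[OF bij_betw_imp_inj_on[OF enum]]
    by (auto simp: C_def inverse_branch_curves_disjoint)
  moreover have "frontier preimage = (\<Union>i<CARD('n). C i)"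
  proof -
    have "(\<Union>i<CARD('n). C i) = (\<Union>j\<in>enum ` {..<CARD('n)}. inverse_branch j ` sphere 0 1)"
      unfolding C_def by simp
    then show ?thesis
      unfolding frontier_preimage_eq bij_betw_imp_surj_on[OF enum] by simp
  qed
  ultimately show ?thesis
    unfolding n_good_def using connected_preimage by blast
qed

end

theorem mainTheorem15:
  fixes K :: "(complex ^ 'n) set"
  assumes "compact K" and "K \<subseteq> config_space"
  shows "\<exists>\<epsilon>>0. \<forall>b\<in>K. \<forall>a :: complex ^ 'n.
           (\<forall>j. 0 < norm (a $ j) \<and> norm (a $ j) \<le> \<epsilon>) \<longrightarrow>
           n_good CARD('n) (Rab_preimage_disc a b)"
proof -
  obtain D where "D > 0" and D: "\<forall>b\<in>K. \<forall>i k. i \<noteq> k \<longrightarrow> D \<le> norm (b$i - b$k)"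
    using compact_config_space_separated[OF assms] by (elim exE conjE)
  show ?thesis
  proof (intro exI[of _ "D / (64 * real CARD('n))"] conjI ballI allI impI)
    show "0 < D / (64 * real CARD('n))"
      using \<open>D > 0\<close> by simp
    fix b a :: "complex ^ 'n"
    assume "b \<in> K" and a: "\<forall>j. 0 < norm (a$j) \<and> norm (a$j) \<le> D / (64 * real CARD('n))"
    have "real CARD('n) * norm (a$j) \<le> D / 4 / 16" for j
      using a mult_left_mono[of "norm (a$j)" "D / (64 * real CARD('n))" "real CARD('n)"]
      by simp
    then have "small_residues a b (D / 4)"
      using \<open>D > 0\<close> D \<open>b \<in> K\<close> a by unfold_locales auto
    then show "n_good CARD('n) (Rab_preimage_disc a b)"
      by (rule small_residues.n_good_preimage)
  qed
qed

end
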